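(* Let $g,h\in\mathbb{F}[x]$ and let $\theta:A_h\to A_g$ be an $\mathbb{F}$-algebra isomorphism. Then $\theta(h)=\lambda g$ for some $\lambda\in\mathbb{F}^*$ (here $h\in\mathbb{F}[x]\subseteq A_h$ and $g\in\mathbb{F}[x]\subseteq A_g$).
   Context: $\mathbb{F}$ is an arbitrary field. For $h\in\mathbb{F}[x]$, $A_h$ is the unital associative $\mathbb{F}$-algebra generated by $x,\hat y$ with defining relation $\hat yx-x\hat y=h$; $\mathbb{F}[x]$ is naturally a subalgebra of $A_h$. *)

theory Defs
  imports "HOL-Computational_Algebra.Polynomial"
begin

text \<open>Model of A_h: every element is uniquely sum_i f_i(x) yhat^i with f_i in F[x]
  (Ore extension F[x][yhat; delta_h], delta_h(f) = h * f').  An element is a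
  polynomial in yhat (outer poly) with coefficients in F[x] (inner poly).\<close>

definition hder :: "'a::field poly \<Rightarrow> 'a poly \<Rightarrow> 'a poly" where
  "hder h f = h * pderiv f"

text \<open>Multiplication in A_h, from yhat^i q = sum_k (i choose k) delta^k(q) yhat^(i-k).\<close>
definition amult :: "'a::field poly \<Rightarrow> 'a poly poly \<Rightarrow> 'a poly poly \<Rightarrow> 'a poly poly" where
  "amult h P Q = (\<Sum>i\<le>degree P. \<Sum>j\<le>degree Q. \<Sum>k\<le>i.
      monom (of_nat (i choose k) * coeff P i * ((hder h ^^ k) (coeff Q j))) (i - k + j))"

definition alg_iso :: "'a::field poly \<Rightarrow> 'a poly \<Rightarrow> ('a poly poly \<Rightarrow> 'a poly poly) \<Rightarrow> bool" where
  "alg_iso h g \<theta> \<longleftrightarrow> bij \<theta>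
     \<and> (\<forall>P Q. \<theta> (P + Q) = \<theta> P + \<theta> Q)
     \<and> (\<forall>c P. \<theta> (smult [:c:] P) = smult [:c:] (\<theta> P))
     \<and> (\<forall>P Q. \<theta> (amult h P Q) = amult g (\<theta> P) (\<theta> Q))
     \<and> \<theta> 1 = 1"

end

theory Submission
  imports Defs
begin

(* In A_h the product agrees with the commutative product of F[x][y]
   up to terms divisible by h, so every commutator [P,Q] = PQ - QP of A_h has all
   its F[x]-coefficients divisible by h; moreover [yhat, x] = h.
   For an isomorphism theta : A_h -> A_g this gives
     theta(h) = [theta yhat, theta x] = g * u      for some u in A_g,
   and, applying the same to the preimages a, b of yhat, x in A_h,
     g = [theta a, theta b] = theta([a,b]) = theta(h * v) = g * u * theta(v).
   If g <> 0 this forces u * theta(v) = 1, so u is left invertible in A_g; a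
   top-degree comparison shows that such u is a nonzero scalar c, whence
   theta(h) = c * g. *)

lemma smult_sum_right: "smult c (\<Sum>x\<in>S. f x) = (\<Sum>x\<in>S. smult c (f x))"
  by (rule poly_eqI) (simp add: coeff_sum sum_distrib_left)

lemma mult_as_double_sum:
  "P * Q = (\<Sum>i\<le>degree P. \<Sum>j\<le>degree Q. monom (coeff P i * coeff Q j) (i + j))"
proof -
  have "P * Q = (\<Sum>i\<le>degree P. monom (coeff P i) i) * (\<Sum>j\<le>degree Q. monom (coeff Q j) j)"
    by (simp add: poly_as_sum_of_monoms)
  also have "\<dots> = (\<Sum>i\<le>degree P. \<Sum>j\<le>degree Q. monom (coeff P i * coeff Q j) (i + j))"
    by (simp add: sum_product mult_monom)
  finally show ?thesis .
qed

definition coeffs_dvd :: "'a::field poly \<Rightarrow> 'a poly poly \<Rightarrow> bool" where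
  "coeffs_dvd h P \<longleftrightarrow> (\<forall>n. h dvd coeff P n)"

lemma coeffs_dvd_sum: "(\<And>x. x \<in> S \<Longrightarrow> coeffs_dvd h (f x)) \<Longrightarrow> coeffs_dvd h (\<Sum>x\<in>S. f x)"
  unfolding coeffs_dvd_def by (simp add: coeff_sum dvd_sum)

lemma coeffs_dvd_diff: "coeffs_dvd h P \<Longrightarrow> coeffs_dvd h Q \<Longrightarrow> coeffs_dvd h (P - Q)"
  unfolding coeffs_dvd_def by simp

lemma coeffs_dvd_imp_smult: "coeffs_dvd h P \<Longrightarrow> \<exists>U. P = smult h U"
  unfolding coeffs_dvd_def
  by (intro exI[of _ "map_poly (\<lambda>c. c div h) P"] poly_eqI) (simp add: coeff_map_poly)

lemma hder_iterate_dvd: "k > 0 \<Longrightarrow> h dvd (hder h ^^ k) q"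
  by (cases k) (auto simp: hder_def)

lemma hder_iterate_zero: "(hder h ^^ k) 0 = 0"
  by (induction k) (auto simp: hder_def)

lemma amult_zero_left: "amult h 0 Q = 0"
  unfolding amult_def by simp

lemma amult_const_left: "amult h [:c:] Q = smult c Q"
proof -
  have "amult h [:c:] Q = (\<Sum>j\<le>degree Q. monom (c * coeff Q j) j)"
    unfolding amult_def by simp
  also have "\<dots> = smult c Q"
    by (subst (2) poly_as_sum_of_monoms[symmetric]) (simp add: smult_sum_right smult_monom)
  finally show ?thesis .
qed

lemma amult_smult_left: "amult h (smult c P) Q = smult c (amult h P Q)"
proof (cases "c = 0")
  case True then show ?thesis by (simp add: amult_zero_left)
next
  case False then show ?thesis
    unfolding amult_def by (simp add: smult_sum_right smult_monom mult_ac)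
qed

text \<open>Modulo h, the product of A_h is the commutative product: the terms
  with k = 0 form P * Q, all others involve a power of hder.\<close>
lemma amult_minus_mult_coeffs_dvd: "coeffs_dvd h (amult h P Q - P * Q)"
proof -
  let ?T = "\<lambda>i j k. monom (of_nat (i choose k) * coeff P i * ((hder h ^^ k) (coeff Q j))) (i - k + j)"
  have T0: "?T i j 0 = monom (coeff P i * coeff Q j) (i + j)" for i j by simp
  have "P * Q = (\<Sum>i\<le>degree P. \<Sum>j\<le>degree Q. \<Sum>k\<le>i. (if k = 0 then ?T i j 0 else 0))"
    by (subst mult_as_double_sum) (simp only: T0 sum.delta finite_atMost atMost_iff, simp)
  then have "amult h P Q - P * Q = (\<Sum>i\<le>degree P. \<Sum>j\<le>degree Q.
        (\<Sum>k\<le>i. ?T i j k - (if k = 0 then ?T i j 0 else 0)))"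
    unfolding amult_def by (simp only: sum_subtractf)
  also have "coeffs_dvd h \<dots>"
  proof (intro coeffs_dvd_sum)
    fix i j k
    show "coeffs_dvd h (?T i j k - (if k = 0 then ?T i j 0 else 0))"
    proof (cases "k = 0")
      case True then show ?thesis by (simp add: coeffs_dvd_def)
    next
      case False
      then have "h dvd (hder h ^^ k) (coeff Q j)" by (simp add: hder_iterate_dvd)
      then show ?thesis using False unfolding coeffs_dvd_def by auto
    qed
  qed
  finally show ?thesis .
qed

definition commutator :: "'a::field poly \<Rightarrow> 'a poly poly \<Rightarrow> 'a poly poly \<Rightarrow> 'a poly poly" where
  "commutator h P Q = amult h P Q - amult h Q P"

lemma commutator_smult: "\<exists>U. commutator h P Q = smult h U"
proof -
  have "commutator h P Q = (amult h P Q - P * Q) - (amult h Q P - Q * P)"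
    by (simp add: commutator_def mult.commute)
  then have "coeffs_dvd h (commutator h P Q)"
    by (metis coeffs_dvd_diff amult_minus_mult_coeffs_dvd)
  then show ?thesis by (rule coeffs_dvd_imp_smult)
qed

definition gen_y :: "'a::field poly poly" where "gen_y = monom 1 1"
definition gen_x :: "'a::field poly poly" where "gen_x = [:[:0, 1:]:]"

lemma commutator_gens: "commutator h gen_y gen_x = [:h:]"
  unfolding commutator_def amult_def gen_y_def gen_x_def
  by (simp add: degree_monom_eq hder_def atMost_Suc monom_Suc pderiv_pCons monom_0 one_pCons)

lemma amult_top_coeff:
  "coeff (amult h P Q) (degree P + degree Q) = lead_coeff P * lead_coeff Q"
proof -
  let ?dP = "degree P" and ?dQ = "degree Q"
  have "coeff (amult h P Q) (?dP + ?dQ) = (\<Sum>i\<le>?dP. \<Sum>j\<le>?dQ. \<Sum>k\<le>i.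
      (if i = ?dP \<and> j = ?dQ \<and> k = 0 then coeff P i * coeff Q j else 0))"
    unfolding amult_def coeff_sum coeff_monom by (intro sum.cong refl) auto
  also have "\<dots> = (\<Sum>i\<le>?dP. \<Sum>j\<le>?dQ. (if i = ?dP \<and> j = ?dQ then coeff P i * coeff Q j else 0))"
    by (intro sum.cong refl) (auto simp: sum.delta)
  also have "\<dots> = (\<Sum>i\<le>?dP. (if i = ?dP then coeff P i * coeff Q ?dQ else 0))"
    by (intro sum.cong refl) (auto simp: sum.delta)
  also have "\<dots> = lead_coeff P * lead_coeff Q"
    by (simp add: sum.delta)
  finally show ?thesis .
qed

lemma amult_left_unit:
  assumes inv: "amult h U W = 1"
  shows "\<exists>c. c \<noteq> 0 \<and> U = [:[:c:]:]"
proof -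
  have "U \<noteq> 0" using inv by (auto simp: amult_zero_left)
  have "W \<noteq> 0" using inv by (auto simp: amult_def hder_iterate_zero)
  have "degree U = 0"
  proof (rule ccontr)
    assume "degree U \<noteq> 0"
    then have "coeff (amult h U W) (degree U + degree W) = 0" using inv by simp
    then show False using amult_top_coeff[of h U W] \<open>U \<noteq> 0\<close> \<open>W \<noteq> 0\<close> by simp
  qed
  then obtain u where u: "U = [:u:]" by (metis degree_eq_zeroE)
  have "u * coeff W 0 = 1"
    using arg_cong[OF inv, of "\<lambda>P. coeff P 0"] by (simp add: u amult_const_left)
  then have "u dvd 1" by (metis dvdI)
  then obtain c where "u = [:c:]" "c dvd 1" using is_unit_poly_iff by blast
  then show ?thesis using u by auto
qed

lemma alg_iso_commutator:
  assumes "alg_iso h g \<theta>"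
  shows "\<theta> (commutator h P Q) = commutator g (\<theta> P) (\<theta> Q)"
proof -
  have add: "\<theta> (A + B) = \<theta> A + \<theta> B" for A B using assms by (simp add: alg_iso_def)
  have diff: "\<theta> (A - B) = \<theta> A - \<theta> B" for A B
    using add[of B "A - B"] by (simp add: algebra_simps)
  show ?thesis using assms by (simp add: commutator_def diff alg_iso_def)
qed

text \<open>\<theta>(h) is a commutator in A_g, hence an F[x]-multiple of g.\<close>
lemma alg_iso_image_h_smult:
  assumes "alg_iso h g \<theta>"
  shows "\<exists>U. \<theta> [:h:] = smult g U"
  using commutator_smult[of g "\<theta> gen_y" "\<theta> gen_x"]
  by (metis alg_iso_commutator[OF assms] commutator_gens)

text \<open>The cofactor U in \<theta>(h) = g U is left invertible in A_g,
  since g itself is the image of a commutator, hence of a multiple of h.\<close>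
lemma alg_iso_image_h_cofactor_unit:
  assumes iso: "alg_iso h g \<theta>" and "g \<noteq> 0" and U: "\<theta> [:h:] = smult g U"
  shows "\<exists>W. amult g U W = 1"
proof -
  obtain a b where a: "\<theta> a = gen_y" and b: "\<theta> b = gen_x"
    using iso by (metis alg_iso_def bij_pointE)
  obtain V where V: "commutator h a b = smult h V"
    using commutator_smult by blast
  have "[:g:] = \<theta> (commutator h a b)"
    by (simp add: alg_iso_commutator[OF iso] a b commutator_gens)
  also have "\<dots> = \<theta> (amult h [:h:] V)" by (simp add: V amult_const_left)
  also have "\<dots> = smult g (amult g U (\<theta> V))"
    using iso by (simp add: alg_iso_def U amult_smult_left)
  finally have "smult g (amult g U (\<theta> V) - 1) = 0" by (simp add: smult_diff_right)
  with \<open>g \<noteq> 0\<close> show ?thesis by auto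
qed

theorem lemma8p1:
  fixes g h :: "'a::field poly" and \<theta> :: "'a poly poly \<Rightarrow> 'a poly poly"
  assumes "alg_iso h g \<theta>"
  shows "\<exists>c::'a. c \<noteq> 0 \<and> \<theta> [:h:] = [:smult c g:]"
proof -
  obtain U where U: "\<theta> [:h:] = smult g U"
    using alg_iso_image_h_smult[OF assms] by blast
  show ?thesis
  proof (cases "g = 0")
    case True
    then show ?thesis using U by (intro exI[of _ 1]) simp
  next
    case False
    then obtain W where "amult g U W = 1"
      using alg_iso_image_h_cofactor_unit[OF assms _ U] by blast
    then obtain c where "c \<noteq> 0" "U = [:[:c:]:]"
      using amult_left_unit by blast
    then show ?thesis using U by (auto simp: mult.commute)
  qed
qed

end
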